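(* For any uplink zero-forcing message passing decoding scheme in the locally connected network with connectivity parameter $L$, and any two decoding pairs $(\text{MT } i_1,\text{BS } j_1)$ and $(\text{MT } i_2,\text{BS } j_2)$ with $i_1\neq i_2$, at least one of the following holds: $j_2\notin\{i_1,i_1-1,\dots,i_1-L\}$, or $j_1\notin\{i_2,i_2-1,\dots,i_2-L\}$.
   Context: Network: $K$ base stations BS $1,\dots,K$ and $K$ mobile terminals MT $1,\dots,K$, single-antenna; the channel coefficient $H_{i,j}$ between MT $i$ and BS $j$ is zero iff $i\notin\{j,\dots,j+L\}$, nonzero coefficients generic (drawn from a continuous joint distribution). Uplink: BS $j$ receives $Y_j=\sum_iH_{i,j}X_i+Z_j$. MT $i$ has message $W_i$ and is associated with a set $\mathcal C_i\subseteq[K]$ of base stations, $|\mathcal C_i|\le N_c$. Zero-forcing message passing decoding: each message is decoded at at most one base station; a decoded message is passed over the backhaul to the other base stations in its association set, which use it only to cancel its interference. The pair (MT $j$, BS $i$) is a decoding pair if $i\in\mathcal C_j$ and, given the messages $B_i$ that BS $i$ has received over the backhaul, the noiseless signal $Y_i-Z_i$ depends on $W_j$ and on no other message, so $W_j$ is decoded at BS $i$. *)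

theory Defs
  imports Complex_Main
begin

text \<open>MTs and BSs are indexed by 1..K. H m b is the channel coefficient between
MT m and BS b. Locally connected network with connectivity parameter L:
H m b is nonzero iff m is in {b, ..., b+L}.\<close>
definition locally_connected :: "nat \<Rightarrow> nat \<Rightarrow> (nat \<Rightarrow> nat \<Rightarrow> complex) \<Rightarrow> bool" where
  "locally_connected K L H \<longleftrightarrow>
     (\<forall>m\<in>{1..K}. \<forall>b\<in>{1..K}. H m b \<noteq> 0 \<longleftrightarrow> b \<le> m \<and> m \<le> b + L)"

text \<open>A zero-forcing message passing decoding scheme: association sets C
(C m \<subseteq> [K], |C m| \<le> Nc), a decoding map dec (message m is decoded at most at one
BS, namely at b iff dec m = Some b), and decoding times t (message m is decoded at
time t m; a message can be used for cancellation only after it has been decoded).\<close>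
definition zf_scheme ::
  "nat \<Rightarrow> nat \<Rightarrow> (nat \<Rightarrow> nat set) \<Rightarrow> (nat \<Rightarrow> nat option) \<Rightarrow> bool" where
  "zf_scheme K Nc C dec \<longleftrightarrow>
     (\<forall>m\<in>{1..K}. C m \<subseteq> {1..K} \<and> card (C m) \<le> Nc) \<and>
     (\<forall>m b. dec m = Some b \<longrightarrow> m \<in> {1..K} \<and> b \<in> C m)"

text \<open>Messages BS b has received over the backhaul before the decoding time of W_k:
messages decoded at another BS, whose association set contains b, and decoded
strictly earlier.\<close>
definition backhaul ::
  "nat \<Rightarrow> (nat \<Rightarrow> nat set) \<Rightarrow> (nat \<Rightarrow> nat option) \<Rightarrow> (nat \<Rightarrow> nat) \<Rightarrow> nat \<Rightarrow> nat \<Rightarrow> nat set" where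
  "backhaul K C dec t b k =
     {m \<in> {1..K}. \<exists>b'. dec m = Some b' \<and> b' \<noteq> b \<and> b \<in> C m \<and> t m < t k}"

text \<open>Messages on which the noiseless received signal Y_b - Z_b = sum_m H m b X_m
depends, given the set B of known messages.\<close>
definition depends_set ::
  "nat \<Rightarrow> (nat \<Rightarrow> nat \<Rightarrow> complex) \<Rightarrow> nat \<Rightarrow> nat set \<Rightarrow> nat set" where
  "depends_set K H b B = {m \<in> {1..K}. H m b \<noteq> 0 \<and> m \<notin> B}"

definition decoding_pair ::
  "nat \<Rightarrow> (nat \<Rightarrow> nat \<Rightarrow> complex) \<Rightarrow> (nat \<Rightarrow> nat set) \<Rightarrow> (nat \<Rightarrow> nat option) \<Rightarrow> (nat \<Rightarrow> nat)
   \<Rightarrow> nat \<Rightarrow> nat \<Rightarrow> bool" where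
  "decoding_pair K H C dec t j b \<longleftrightarrow>
     j \<in> {1..K} \<and> b \<in> {1..K} \<and> b \<in> C j \<and> dec j = Some b \<and>
     depends_set K H b (backhaul K C dec t b j) = {j}"

end

theory Submission
  imports Defs
begin

text \<open>If BS \<open>j\<^sub>2\<close> hears MT \<open>i\<^sub>1\<close> and BS \<open>j\<^sub>1\<close> hears MT \<open>i\<^sub>2\<close>, then each
message must already have been cancelled, hence decoded strictly earlier, when the other one
is decoded; the two messages cannot both precede each other.\<close>

lemma locally_connected_nonzero:
  assumes "locally_connected K L H" "m \<in> {1..K}" "b \<in> {1..K}" "b \<in> {m - L..m}"
  shows "H m b \<noteq> 0"
  using assms unfolding locally_connected_def by auto

lemma decoding_pair_interferer_decoded_earlier:
  assumes pair: "decoding_pair K H C dec t j b"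
    and "m \<in> {1..K}" "m \<noteq> j" "H m b \<noteq> 0"
  shows "t m < t j"
proof -
  have "depends_set K H b (backhaul K C dec t b j) = {j}"
    using pair unfolding decoding_pair_def by simp
  with assms(2-4) have "m \<in> backhaul K C dec t b j"
    unfolding depends_set_def by blast
  then show ?thesis
    unfolding backhaul_def by blast
qed

theorem lemma1:
  fixes K L Nc :: nat and H :: "nat \<Rightarrow> nat \<Rightarrow> complex"
    and C :: "nat \<Rightarrow> nat set" and dec :: "nat \<Rightarrow> nat option" and t :: "nat \<Rightarrow> nat"
    and i1 j1 i2 j2 :: nat
  assumes "locally_connected K L H"
    and "zf_scheme K Nc C dec"
    and "decoding_pair K H C dec t i1 j1"
    and "decoding_pair K H C dec t i2 j2"
    and "i1 \<noteq> i2"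
  shows "j2 \<notin> {i1 - L..i1} \<or> j1 \<notin> {i2 - L..i2}"
proof (rule ccontr)
  assume "\<not> ?thesis"
  then have hears: "j2 \<in> {i1 - L..i1}" "j1 \<in> {i2 - L..i2}"
    by auto
  have range: "i1 \<in> {1..K}" "j1 \<in> {1..K}" "i2 \<in> {1..K}" "j2 \<in> {1..K}"
    using assms(3,4) unfolding decoding_pair_def by auto
  have "t i1 < t i2"
    using decoding_pair_interferer_decoded_earlier[OF assms(4)] assms(5) range hears(1)
      locally_connected_nonzero[OF assms(1)] by blast
  moreover have "t i2 < t i1"
    using decoding_pair_interferer_decoded_earlier[OF assms(3)] assms(5) range hears(2)
      locally_connected_nonzero[OF assms(1)] by blast
  ultimately show False
    by simp
qed

end
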